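(* If $p\geq 7$ is an integer, then there exists a $p$-qubit UPB of size $s$ for every integer $s$ with $$\frac{p^2+3p-30}{2}\leq s\leq 2^p-6.$$
   Context: A product state in $(\mathbb{C}^2)^{\otimes p}$ is a vector $|v_1\rangle\otimes\cdots\otimes|v_p\rangle$ with each $|v_j\rangle\in\mathbb{C}^2$. A $p$-qubit unextendible product basis (UPB) is a finite set $\mathcal{S}\subseteq(\mathbb{C}^2)^{\otimes p}$ of unit product vectors that are pairwise orthogonal, such that no nonzero product vector outside $\mathcal{S}$ is orthogonal to every element of $\mathcal{S}$. The size of a UPB is its number of elements. *)

theory Defs
  imports Complex_Main
begin

text \<open>The p-qubit space (C^2)^{tensor p} is modelled as complex-valued functions on
  bit strings (bool lists) of length p (computational basis); entries at other
  lists are zero. A single-qubit vector is a function bool => complex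
  (False = |0>, True = |1>).\<close>

definition basis_strings :: "nat \<Rightarrow> bool list set" where
  "basis_strings p = {b. length b = p}"

definition prod_vec :: "nat \<Rightarrow> (nat \<Rightarrow> bool \<Rightarrow> complex) \<Rightarrow> bool list \<Rightarrow> complex" where
  "prod_vec p v = (\<lambda>b. if length b = p then (\<Prod>j<p. v j (b ! j)) else 0)"

definition is_product_vec :: "nat \<Rightarrow> (bool list \<Rightarrow> complex) \<Rightarrow> bool" where
  "is_product_vec p x \<longleftrightarrow> (\<exists>v. x = prod_vec p v)"

definition tinner :: "nat \<Rightarrow> (bool list \<Rightarrow> complex) \<Rightarrow> (bool list \<Rightarrow> complex) \<Rightarrow> complex" where
  "tinner p x y = (\<Sum>b\<in>basis_strings p. cnj (x b) * y b)"

definition is_UPB :: "nat \<Rightarrow> (bool list \<Rightarrow> complex) set \<Rightarrow> bool" where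
  "is_UPB p S \<longleftrightarrow>
     finite S \<and>
     (\<forall>x\<in>S. is_product_vec p x \<and> tinner p x x = 1) \<and>
     (\<forall>x\<in>S. \<forall>y\<in>S. x \<noteq> y \<longrightarrow> tinner p x y = 0) \<and>
     (\<forall>z. is_product_vec p z \<and> z \<noteq> (\<lambda>_. 0) \<and> z \<notin> S \<longrightarrow> (\<exists>x\<in>S. tinner p x z \<noteq> 0))"

end

theory Submission
  imports Defs
begin

text \<open>
  Product states are named by words over the alphabet \<open>\<nat> \<times> bool\<close>: \<open>(k, False)\<close>
  and \<open>(k, True)\<close> form an orthonormal basis of \<open>\<complex>\<^sup>2\<close>, and symbols with different \<open>k\<close> are
  neither parallel nor orthogonal. Two words are orthogonal when they carry complementary
  symbols at some position. As a nonzero qubit state is orthogonal to at most one symbol, a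
  set of pairwise orthogonal words avoiding every choice of one symbol per position (a
  combinatorial UPB) yields a UPB of the same size.
\<close>

subsection \<open>Inner products of product vectors factorize\<close>

lemma sum_prod_bool_lists:
  fixes g :: "nat \<Rightarrow> bool \<Rightarrow> 'a::comm_semiring_1"
  shows "(\<Sum>b\<in>{b::bool list. length b = p}. \<Prod>j<p. g j (b ! j)) = (\<Prod>j<p. g j False + g j True)"
proof (induction p arbitrary: g)
  case 0
  have "{b::bool list. length b = 0} = {[]}" by auto
  then show ?case by simp
next
  case (Suc p)
  let ?L = "{b::bool list. length b = p}"
  have split: "{b::bool list. length b = Suc p} = (\<lambda>(c, b). c # b) ` (UNIV \<times> ?L)"
    by (auto simp: length_Suc_conv image_iff)
  have inj: "inj_on (\<lambda>(c, b). c # (b::bool list)) (UNIV \<times> ?L)"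
    by (auto simp: inj_on_def)
  have "(\<Sum>b\<in>{b::bool list. length b = Suc p}. \<Prod>j<Suc p. g j (b ! j))
      = (\<Sum>c\<in>UNIV. \<Sum>b\<in>?L. g 0 c * (\<Prod>j<p. g (Suc j) (b ! j)))"
    unfolding split sum.reindex[OF inj] sum.cartesian_product
    by (simp only: case_prod_unfold o_def prod.lessThan_Suc_shift nth_Cons_0 nth_Cons_Suc)
  also have "\<dots> = (\<Sum>c\<in>UNIV. g 0 c * (\<Prod>j<p. g (Suc j) False + g (Suc j) True))"
    by (simp add: sum_distrib_left[symmetric] Suc.IH[of "\<lambda>j. g (Suc j)"])
  also have "\<dots> = (\<Prod>j<Suc p. g j False + g j True)"
    by (simp add: UNIV_bool prod.lessThan_Suc_shift distrib_right del: prod.lessThan_Suc)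
  finally show ?case .
qed

definition qubit_inner :: "(bool \<Rightarrow> complex) \<Rightarrow> (bool \<Rightarrow> complex) \<Rightarrow> complex" where
  "qubit_inner v w = cnj (v False) * w False + cnj (v True) * w True"

lemma tinner_prod_vec:
  "tinner p (prod_vec p v) (prod_vec p w) = (\<Prod>j<p. qubit_inner (v j) (w j))"
proof -
  have "tinner p (prod_vec p v) (prod_vec p w)
      = (\<Sum>b\<in>{b::bool list. length b = p}. \<Prod>j<p. cnj (v j (b ! j)) * w j (b ! j))"
    unfolding tinner_def basis_strings_def prod_vec_def
    by (intro sum.cong refl) (simp add: prod.distrib)
  also have "\<dots> = (\<Prod>j<p. qubit_inner (v j) (w j))"
    by (subst sum_prod_bool_lists) (simp add: qubit_inner_def)
  finally show ?thesis .
qed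

lemma prod_vec_nonzero_factor:
  assumes "prod_vec p w \<noteq> (\<lambda>_. 0)" "j < p"
  shows "w j False \<noteq> 0 \<or> w j True \<noteq> 0"
proof -
  obtain b where "prod_vec p w b \<noteq> 0" using assms(1) by auto
  then have "(\<Prod>k<p. w k (b ! k)) \<noteq> 0"
    unfolding prod_vec_def by (auto split: if_splits)
  then have "w j (b ! j) \<noteq> 0" using assms(2) by auto
  then show ?thesis by (cases "b ! j") auto
qed

subsection \<open>An infinite alphabet of qubit states\<close>

text \<open>A symbol \<open>(k, b)\<close> with \<open>k \<in> \<nat>\<close> names the qubit state proportional to \<open>(1, k)\<close>
  if \<open>b = False\<close> and to its orthogonal complement \<open>(-k, 1)\<close> if \<open>b = True\<close>.
  Distinct \<open>k\<close> give distinct (non-parallel, non-orthogonal) bases of \<open>\<complex>\<^sup>2\<close>.\<close>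
type_synonym symbol = "nat \<times> bool"

definition sym_coord :: "symbol \<Rightarrow> bool \<Rightarrow> real" where
  "sym_coord \<sigma> i = (if snd \<sigma> then (if i then 1 else - real (fst \<sigma>))
                               else (if i then real (fst \<sigma>) else 1))"

definition sym_norm :: "nat \<Rightarrow> real" where
  "sym_norm k = sqrt (1 + (real k)\<^sup>2)"

definition sym_vec :: "symbol \<Rightarrow> bool \<Rightarrow> complex" where
  "sym_vec \<sigma> i = of_real (sym_coord \<sigma> i / sym_norm (fst \<sigma>))"

lemma sym_norm_pos: "sym_norm k > 0"
  unfolding sym_norm_def by (simp add: add_pos_nonneg)

lemma qubit_inner_sym_vec:
  "qubit_inner (sym_vec \<sigma>) w
     = (of_real (sym_coord \<sigma> False) * w False + of_real (sym_coord \<sigma> True) * w True)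
       / of_real (sym_norm (fst \<sigma>))"
  unfolding qubit_inner_def sym_vec_def by (simp add: add_divide_distrib)

lemma sym_vec_normalized: "qubit_inner (sym_vec \<sigma>) (sym_vec \<sigma>) = 1"
proof -
  have "sym_coord \<sigma> False * sym_coord \<sigma> False + sym_coord \<sigma> True * sym_coord \<sigma> True
        = (sym_norm (fst \<sigma>))\<^sup>2"
    by (simp add: sym_coord_def sym_norm_def power2_eq_square)
  then show ?thesis
    using sym_norm_pos[of "fst \<sigma>"]
    by (simp add: qubit_inner_def sym_vec_def power2_eq_square add_divide_distrib[symmetric]
        flip: of_real_mult of_real_add)
qed

lemma sym_vec_complement_orth: "qubit_inner (sym_vec (k, b)) (sym_vec (k, \<not> b)) = 0"
  by (cases b) (simp_all add: qubit_inner_def sym_vec_def sym_coord_def)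

lemma sym_coord_det:
  assumes "\<sigma> \<noteq> \<tau>"
  shows "sym_coord \<sigma> False * sym_coord \<tau> True - sym_coord \<sigma> True * sym_coord \<tau> False \<noteq> 0"
proof -
  obtain k b l c where s: "\<sigma> = (k, b)" "\<tau> = (l, c)" by (cases \<sigma>, cases \<tau>)
  have "1 + real k * real l > 0" by (simp add: add_pos_nonneg)
  then show ?thesis
    using assms unfolding s by (cases b; cases c) (auto simp: sym_coord_def algebra_simps)
qed

lemma homogeneous_2x2_trivial:
  fixes a b c d x y :: "'a::field"
  assumes "a * d - b * c \<noteq> 0" "a * x + b * y = 0" "c * x + d * y = 0"
  shows "x = 0 \<and> y = 0"
proof -
  have "(a * d - b * c) * x = d * (a * x + b * y) - b * (c * x + d * y)"
       "(a * d - b * c) * y = a * (c * x + d * y) - c * (a * x + b * y)"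
    by (simp_all add: algebra_simps)
  then show ?thesis using assms by simp
qed

lemma sym_vec_orth_unique:
  assumes "qubit_inner (sym_vec \<sigma>) w = 0" "qubit_inner (sym_vec \<tau>) w = 0"
    and "w False \<noteq> 0 \<or> w True \<noteq> 0"
  shows "\<sigma> = \<tau>"
proof (rule ccontr)
  assume "\<sigma> \<noteq> \<tau>"
  have "of_real (sym_coord \<sigma> False) * w False + of_real (sym_coord \<sigma> True) * w True = 0"
       "of_real (sym_coord \<tau> False) * w False + of_real (sym_coord \<tau> True) * w True = 0"
    using assms(1,2) sym_norm_pos[of "fst \<sigma>"] sym_norm_pos[of "fst \<tau>"]
    by (simp_all add: qubit_inner_sym_vec)
  moreover have "complex_of_real (sym_coord \<sigma> False) * of_real (sym_coord \<tau> True)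
                 - of_real (sym_coord \<sigma> True) * of_real (sym_coord \<tau> False) \<noteq> 0"
    using sym_coord_det[OF \<open>\<sigma> \<noteq> \<tau>\<close>] by (simp flip: of_real_mult of_real_diff)
  ultimately show False
    using homogeneous_2x2_trivial assms(3) by blast
qed

subsection \<open>Combinatorial UPBs\<close>

text \<open>A word of length \<open>p\<close> over the alphabet names the product state
  \<open>|x\<^sub>0\<rangle> \<otimes> \<dots> \<otimes> |x\<^sub>p\<^sub>-\<^sub>1\<rangle>\<close>.\<close>
type_synonym word = "symbol list"

definition orth_words :: "word \<Rightarrow> word \<Rightarrow> bool" where
  "orth_words x y \<longleftrightarrow> (\<exists>j<length x. fst (x ! j) = fst (y ! j) \<and> snd (x ! j) \<noteq> snd (y ! j))"

text \<open>Since a nonzero qubit state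
  is orthogonal to at most one symbol state, this is exactly what unextendibility needs.\<close>
definition comb_UPB :: "nat \<Rightarrow> word set \<Rightarrow> bool" where
  "comb_UPB p S \<longleftrightarrow> finite S \<and> (\<forall>x\<in>S. length x = p)
     \<and> (\<forall>x\<in>S. \<forall>y\<in>S. x \<noteq> y \<longrightarrow> orth_words x y)
     \<and> (\<forall>\<phi>. \<exists>x\<in>S. \<forall>j<p. x ! j \<noteq> \<phi> j)"

definition achievable :: "nat \<Rightarrow> nat \<Rightarrow> bool" where
  "achievable p s \<longleftrightarrow> (\<exists>S. comb_UPB p S \<and> card S = s)"

definition word_vec :: "nat \<Rightarrow> word \<Rightarrow> bool list \<Rightarrow> complex" where
  "word_vec p x = prod_vec p (\<lambda>j. sym_vec (x ! j))"

lemma tinner_word_vec: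
  "tinner p (word_vec p x) (word_vec p y) = (\<Prod>j<p. qubit_inner (sym_vec (x ! j)) (sym_vec (y ! j)))"
  unfolding word_vec_def by (rule tinner_prod_vec)

lemma word_vec_normalized: "tinner p (word_vec p x) (word_vec p x) = 1"
  by (simp add: tinner_word_vec sym_vec_normalized)

lemma word_vec_orth:
  assumes "orth_words x y" "length x = p"
  shows "tinner p (word_vec p x) (word_vec p y) = 0"
proof -
  obtain j where j: "j < p" "fst (x ! j) = fst (y ! j)" "snd (x ! j) \<noteq> snd (y ! j)"
    using assms unfolding orth_words_def by auto
  then have "y ! j = (fst (x ! j), \<not> snd (x ! j))" by (cases "y ! j") auto
  then have "qubit_inner (sym_vec (x ! j)) (sym_vec (y ! j)) = 0"
    using sym_vec_complement_orth[of "fst (x ! j)" "snd (x ! j)"] by simp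
  then show ?thesis unfolding tinner_word_vec using j(1) by (intro prod_zero) auto
qed

text \<open>Unextendibility transfers: given a nonzero product vector \<open>\<otimes>\<^sub>j w\<^sub>j\<close>, let \<open>\<phi> j\<close> be the
  (at most one) symbol whose state is orthogonal to \<open>w\<^sub>j\<close>; a word avoiding \<open>\<phi>\<close> everywhere
  is then not orthogonal to \<open>\<otimes>\<^sub>j w\<^sub>j\<close>.\<close>
lemma word_vec_unextendible:
  assumes S: "\<forall>\<phi>. \<exists>x\<in>S. \<forall>j<p. x ! j \<noteq> \<phi> j"
    and z: "is_product_vec p z" "z \<noteq> (\<lambda>_. 0)"
  shows "\<exists>x\<in>S. tinner p (word_vec p x) z \<noteq> 0"
proof -
  obtain w where zw: "z = prod_vec p w" using z(1) unfolding is_product_vec_def by auto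
  define \<phi> where "\<phi> j = (SOME \<sigma>. qubit_inner (sym_vec \<sigma>) (w j) = 0)" for j
  obtain x where x: "x \<in> S" "\<forall>j<p. x ! j \<noteq> \<phi> j" using S by blast
  have "qubit_inner (sym_vec (x ! j)) (w j) \<noteq> 0" if j: "j < p" for j
  proof
    assume orth: "qubit_inner (sym_vec (x ! j)) (w j) = 0"
    then have "qubit_inner (sym_vec (\<phi> j)) (w j) = 0" unfolding \<phi>_def by (rule someI)
    then have "x ! j = \<phi> j"
      using orth prod_vec_nonzero_factor[OF z(2)[unfolded zw] j] sym_vec_orth_unique by blast
    then show False using x(2) j by auto
  qed
  then have "tinner p (word_vec p x) z \<noteq> 0"
    unfolding zw word_vec_def tinner_prod_vec by simp
  then show ?thesis using x(1) by blast
qed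

theorem comb_UPB_to_UPB:
  assumes "comb_UPB p S"
  shows "is_UPB p (word_vec p ` S) \<and> card (word_vec p ` S) = card S"
proof -
  have fin: "finite S" and len: "\<forall>x\<in>S. length x = p"
    and orth: "\<forall>x\<in>S. \<forall>y\<in>S. x \<noteq> y \<longrightarrow> orth_words x y"
    and avoid: "\<forall>\<phi>. \<exists>x\<in>S. \<forall>j<p. x ! j \<noteq> \<phi> j"
    using assms unfolding comb_UPB_def by auto
  have inj: "inj_on (word_vec p) S"
  proof (rule inj_onI, rule ccontr)
    fix x y assume xy: "x \<in> S" "y \<in> S" "word_vec p x = word_vec p y" "x \<noteq> y"
    then have "tinner p (word_vec p x) (word_vec p y) = 0" using orth len word_vec_orth by blast
    then show False using xy(3) word_vec_normalized[of p y] by simp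
  qed
  have "is_UPB p (word_vec p ` S)"
    unfolding is_UPB_def
  proof (intro conjI)
    show "finite (word_vec p ` S)" using fin by simp
    show "\<forall>v\<in>word_vec p ` S. is_product_vec p v \<and> tinner p v v = 1"
      using word_vec_normalized unfolding is_product_vec_def word_vec_def by auto
    show "\<forall>u\<in>word_vec p ` S. \<forall>v\<in>word_vec p ` S. u \<noteq> v \<longrightarrow> tinner p u v = 0"
      using orth len word_vec_orth by fastforce
    show "\<forall>z. is_product_vec p z \<and> z \<noteq> (\<lambda>_. 0) \<and> z \<notin> word_vec p ` S
            \<longrightarrow> (\<exists>v\<in>word_vec p ` S. tinner p v z \<noteq> 0)"
      using word_vec_unextendible[OF avoid] by blast
  qed
  then show ?thesis using card_image[OF inj] by simp
qed

lemma achievable_UPB: "achievable p s \<Longrightarrow> \<exists>S. is_UPB p S \<and> card S = s"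
  unfolding achievable_def using comb_UPB_to_UPB by metis

subsection \<open>Gluing combinatorial UPBs\<close>

definition glue :: "word set \<Rightarrow> (word \<Rightarrow> word set) \<Rightarrow> word set" where
  "glue B F = (\<Union>b\<in>B. (\<lambda>x. b @ x) ` F b)"

lemma orth_words_append_prefix:
  "length b = length c \<Longrightarrow> orth_words b c \<Longrightarrow> orth_words (b @ x) (c @ y)"
  unfolding orth_words_def by (metis nth_append trans_less_add1 length_append)

lemma orth_words_append_suffix:
  "orth_words x y \<Longrightarrow> orth_words (b @ x) (b @ y)"
  unfolding orth_words_def by (metis nth_append_length_plus length_append nat_add_left_cancel_less)

lemma glue_comb_UPB:
  assumes B: "comb_UPB q B" and F: "\<forall>b\<in>B. comb_UPB r (F b)"
  shows "comb_UPB (q + r) (glue B F)"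
  unfolding comb_UPB_def
proof (intro conjI ballI impI allI)
  show "finite (glue B F)" using B F unfolding glue_def comb_UPB_def by auto
next
  fix u assume "u \<in> glue B F"
  then show "length u = q + r" using B F unfolding glue_def comb_UPB_def by auto
next
  fix u v assume uv: "u \<in> glue B F" "v \<in> glue B F" "u \<noteq> v"
  obtain b x where bx: "b \<in> B" "x \<in> F b" "u = b @ x" using uv(1) unfolding glue_def by auto
  obtain c y where cy: "c \<in> B" "y \<in> F c" "v = c @ y" using uv(2) unfolding glue_def by auto
  show "orth_words u v"
  proof (cases "b = c")
    case True
    then show ?thesis
      using F bx cy uv(3) orth_words_append_suffix unfolding comb_UPB_def by auto
  next
    case False
    then show ?thesis
      using B bx cy orth_words_append_prefix unfolding comb_UPB_def by auto
  qed
next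
  fix \<phi>
  have "\<exists>b\<in>B. \<forall>j<q. b ! j \<noteq> \<phi> j" using B unfolding comb_UPB_def by blast
  then obtain b where b: "b \<in> B" "\<forall>j<q. b ! j \<noteq> \<phi> j" by blast
  then have "length b = q" using B unfolding comb_UPB_def by blast
  have "\<forall>\<psi>. \<exists>x\<in>F b. \<forall>j<r. x ! j \<noteq> \<psi> j" using F b(1) unfolding comb_UPB_def by blast
  then obtain x where x: "x \<in> F b" "\<forall>j<r. x ! j \<noteq> \<phi> (q + j)"
    by (elim allE[of _ "\<lambda>j. \<phi> (q + j)"]) blast
  have "\<forall>j<q + r. (b @ x) ! j \<noteq> \<phi> j"
  proof (intro allI impI)
    fix j assume "j < q + r"
    then show "(b @ x) ! j \<noteq> \<phi> j"
      using b(2) \<open>length b = q\<close> x(2)[rule_format, of "j - q"] by (cases "j < q") (auto simp: nth_append)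
  qed
  moreover have "b @ x \<in> glue B F" unfolding glue_def using b x by auto
  ultimately show "\<exists>u\<in>glue B F. \<forall>j<q + r. u ! j \<noteq> \<phi> j" by blast
qed

lemma glue_card:
  assumes B: "comb_UPB q B" and F: "\<forall>b\<in>B. comb_UPB r (F b)"
  shows "card (glue B F) = (\<Sum>b\<in>B. card (F b))"
proof -
  have finB: "finite B" and lenB: "\<forall>b\<in>B. length b = q" using B unfolding comb_UPB_def by auto
  have "card (glue B F) = (\<Sum>b\<in>B. card ((\<lambda>x. b @ x) ` F b))"
    unfolding glue_def
  proof (rule card_UN_disjoint[OF finB])
    show "\<forall>b\<in>B. finite ((@) b ` F b)" using F unfolding comb_UPB_def by auto
    show "\<forall>b\<in>B. \<forall>c\<in>B. b \<noteq> c \<longrightarrow> (@) b ` F b \<inter> (@) c ` F c = {}"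
      using lenB by auto
  qed
  also have "\<dots> = (\<Sum>b\<in>B. card (F b))"
    by (intro sum.cong refl card_image) (simp add: inj_on_def)
  finally show ?thesis .
qed

lemma achievable_glue:
  assumes "achievable q t" "length xs = t" "\<forall>s\<in>set xs. achievable r s"
  shows "achievable (q + r) (sum_list xs)"
proof -
  obtain B where B: "comb_UPB q B" "card B = t" using assms(1) unfolding achievable_def by auto
  obtain G where G: "\<forall>s\<in>set xs. comb_UPB r (G s) \<and> card (G s) = s"
    using assms(3) unfolding achievable_def by metis
  obtain h where h: "bij_betw h B {0..<t}"
    using ex_bij_betw_finite_nat[of B] B unfolding comb_UPB_def by auto
  define F where "F b = G (xs ! h b)" for b
  have "h b < length xs" if "b \<in> B" for b
    using h that assms(2) by (auto simp: bij_betw_def)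
  then have F: "\<forall>b\<in>B. comb_UPB r (F b) \<and> card (F b) = xs ! h b"
    using G unfolding F_def by auto
  have "card (glue B F) = (\<Sum>b\<in>B. card (F b))"
    using glue_card[OF B(1)] F by blast
  also have "\<dots> = (\<Sum>b\<in>B. xs ! h b)"
    using F by simp
  also have "\<dots> = (\<Sum>i\<in>{0..<t}. xs ! i)"
    using sum.reindex_bij_betw[OF h] by simp
  also have "\<dots> = sum_list xs" using assms(2) by (simp add: sum_list_sum_nth)
  finally show ?thesis unfolding achievable_def using glue_comb_UPB[OF B(1)] F by blast
qed

subsection \<open>A UPB of size \<open>m + 1\<close> on an odd number \<open>m\<close> of qubits\<close>

text \<open>For odd \<open>m\<close> the complete graph on the vertices \<open>{0..m}\<close> has the perfect matchings
  \<open>M\<^sub>0, \<dots>, M\<^sub>m\<^sub>-\<^sub>1\<close>, where \<open>M\<^sub>r\<close> joins \<open>r\<close> to \<open>m\<close> and \<open>v, w < m\<close> with \<open>v + w \<equiv> 2r (mod m)\<close>;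
  every edge lies in exactly one of them. \<open>partner m r v\<close> is the neighbour of \<open>v\<close> in \<open>M\<^sub>r\<close>.\<close>
definition partner :: "nat \<Rightarrow> nat \<Rightarrow> nat \<Rightarrow> nat" where
  "partner m r v = (if v = m then r else if v = r then m else nat ((2 * int r - int v) mod int m))"

lemma eq_if_mod_eq:
  "a < m \<Longrightarrow> b < m \<Longrightarrow> int a mod int m = int b mod int m \<Longrightarrow> a = b"
  by simp

lemma mod_cancel_2:
  assumes "odd m" "(2 * x) mod int m = (2 * y) mod int m"
  shows "x mod int m = y mod int m"
proof -
  have "coprime (int m) 2" using assms(1) by (simp add: coprime_commute)
  moreover have "int m dvd 2 * x - 2 * y" using assms(2) mod_eq_dvd_iff by blast
  then have "int m dvd (x - y) * 2" by (metis left_diff_distrib mult.commute)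
  ultimately have "int m dvd x - y" using coprime_dvd_mult_left_iff by blast
  then show ?thesis by (simp add: mod_eq_dvd_iff)
qed

lemma partner_generic:
  assumes "v < m" "v \<noteq> r"
  shows "partner m r v < m" "int (partner m r v) = (2 * int r - int v) mod int m"
  using assms by (simp_all add: partner_def nat_less_iff)

lemma partner_no_fixpoint:
  assumes "odd m" "r < m" "v \<le> m"
  shows "partner m r v \<noteq> v"
proof
  assume fixpoint: "partner m r v = v"
  show False
  proof (cases "v = m \<or> v = r")
    case True then show ?thesis using fixpoint assms(2) by (auto simp: partner_def)
  next
    case False
    then have v: "v < m" "v \<noteq> r" using assms(3) by auto
    have "(2 * int r - int v) mod int m = int v mod int m"
      using partner_generic(2)[OF v] fixpoint v(1) by simp
    then have "(2 * int r) mod int m = (2 * int v) mod int m"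
      by (simp add: mod_eq_dvd_iff algebra_simps)
    then have "int r mod int m = int v mod int m" using mod_cancel_2[OF assms(1)] by blast
    then show False using eq_if_mod_eq[OF assms(2) v(1)] v(2) by simp
  qed
qed

lemma partner_involution:
  assumes "odd m" "r < m" "v \<le> m"
  shows "partner m r (partner m r v) = v"
proof (cases "v = m \<or> v = r")
  case True then show ?thesis using assms(2) by (auto simp: partner_def)
next
  case False
  then have v: "v < m" "v \<noteq> r" using assms(3) by auto
  define w where "w = partner m r v"
  have w: "w < m" "int w = (2 * int r - int v) mod int m"
    using partner_generic[OF v] unfolding w_def by simp_all
  have "w \<noteq> r"
  proof
    assume "w = r"
    then have "int r mod int m = (2 * int r - int v) mod int m" using w(2) assms(2) by simp
    then have "int v mod int m = int r mod int m" by (simp add: mod_eq_dvd_iff)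
    then show False using eq_if_mod_eq[OF v(1) assms(2)] v(2) by simp
  qed
  then have "int (partner m r w) mod int m = (2 * int r - (2 * int r - int v)) mod int m"
    using partner_generic[OF w(1)] w(2) by (simp add: mod_diff_right_eq)
  then have "partner m r w = v"
    using eq_if_mod_eq partner_generic(1)[OF w(1) \<open>w \<noteq> r\<close>] v(1) by simp
  then show ?thesis unfolding w_def .
qed

lemma partner_exists:
  assumes "odd m" "v \<le> m" "v' \<le> m" "v \<noteq> v'"
  shows "\<exists>r<m. partner m r v = v'"
proof -
  consider "v = m" | "v' = m" | "v < m" "v' < m" using assms by linarith
  then show ?thesis
  proof cases
    case 1 then show ?thesis using assms by (intro exI[of _ v']) (auto simp: partner_def)
  next
    case 2 then show ?thesis using assms by (intro exI[of _ v]) (auto simp: partner_def)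
  next
    case 3
    obtain k where k: "m = 2 * k + 1" using assms(1) oddE by blast
    define r where "r = ((v + v') * (k + 1)) mod m"
    have "r < m" unfolding r_def using k by simp
    have "2 * int r mod int m = 2 * int ((v + v') * (k + 1)) mod int m"
      unfolding r_def zmod_int by (simp add: mod_mult_right_eq)
    also have "\<dots> = (int v + int v') * (int m + 1) mod int m"
      unfolding k by (simp add: algebra_simps)
    also have "\<dots> = (int v + int v') mod int m"
      by (simp add: distrib_left)
    finally have r2: "2 * int r mod int m = (int v + int v') mod int m" .
    have "v \<noteq> r"
    proof
      assume "v = r"
      then have "(2 * int v) mod int m = (int v + int v') mod int m" using r2 by simp
      then have "int v mod int m = int v' mod int m" by (simp add: mod_eq_dvd_iff)
      then show False using eq_if_mod_eq 3 assms(4) by blast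
    qed
    then have "int (partner m r v) mod int m = int v' mod int m"
      using partner_generic[OF 3(1)] r2 by (simp add: mod_eq_dvd_iff diff_diff_eq)
    then have "partner m r v = v'"
      using eq_if_mod_eq partner_generic(1)[OF 3(1) \<open>v \<noteq> r\<close>] 3(2) by blast
    then show ?thesis using \<open>r < m\<close> by blast
  qed
qed

text \<open>Vertex \<open>v\<close> gets the word whose \<open>r\<close>-th symbol labels its edge in \<open>M\<^sub>r\<close>: the smaller
  endpoint names the basis, the flag records whether \<open>v\<close> is the larger endpoint.\<close>
definition matching_word :: "nat \<Rightarrow> nat \<Rightarrow> word" where
  "matching_word m v = map (\<lambda>r. (min v (partner m r v), partner m r v < v)) [0..<m]"

definition matching_UPB :: "nat \<Rightarrow> word set" where
  "matching_UPB m = matching_word m ` {0..m}"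

lemma matching_word_nth:
  "r < m \<Longrightarrow> matching_word m v ! r = (min v (partner m r v), partner m r v < v)"
  unfolding matching_word_def by simp

definition decode :: "nat \<Rightarrow> nat \<Rightarrow> symbol \<Rightarrow> nat" where
  "decode m r \<sigma> = (if snd \<sigma> then partner m r (fst \<sigma>) else fst \<sigma>)"

lemma decode_matching_word:
  assumes "odd m" "r < m" "v \<le> m"
  shows "decode m r (matching_word m v ! r) = v"
proof -
  define w where "w = partner m r v"
  have "w \<noteq> v" "partner m r w = v"
    using partner_no_fixpoint[OF assms] partner_involution[OF assms] unfolding w_def by auto
  then show ?thesis
    unfolding matching_word_nth[OF assms(2)] decode_def w_def[symmetric] by (cases "w < v") auto
qed

lemma matching_word_orth:
  assumes "odd m" "v \<le> m" "v' \<le> m" "v \<noteq> v'"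
  shows "orth_words (matching_word m v) (matching_word m v')"
proof -
  obtain r where r: "r < m" "partner m r v = v'" using partner_exists[OF assms] by blast
  then have "partner m r v' = v" using partner_involution[OF assms(1) r(1) assms(2)] by simp
  then show ?thesis
    unfolding orth_words_def using r assms(4)
    by (intro exI[of _ r]) (auto simp: matching_word_nth min_def matching_word_def)
qed

lemma matching_UPB:
  assumes "odd m"
  shows "comb_UPB m (matching_UPB m)" "card (matching_UPB m) = Suc m"
proof -
  have "0 < m" using assms by (simp add: odd_pos)
  then have "inj_on (matching_word m) {0..m}"
    using decode_matching_word[OF assms] by (metis atLeastAtMost_iff inj_onI)
  then show "card (matching_UPB m) = Suc m" unfolding matching_UPB_def by (simp add: card_image)
  have avoid: "\<exists>x\<in>matching_UPB m. \<forall>r<m. x ! r \<noteq> \<phi> r" for \<phi>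
  proof -
    text \<open>Position \<open>r\<close> can only rule out the vertex \<open>decode m r (\<phi> r)\<close>; these are at most
      \<open>m\<close> of the \<open>m + 1\<close> vertices.\<close>
    have "\<not> {0..m} \<subseteq> (\<lambda>r. decode m r (\<phi> r)) ` {..<m}"
    proof
      assume "{0..m} \<subseteq> (\<lambda>r. decode m r (\<phi> r)) ` {..<m}"
      then have "card {0..m} \<le> card ((\<lambda>r. decode m r (\<phi> r)) ` {..<m})"
        by (intro card_mono) auto
      also have "\<dots> \<le> m" using card_image_le[of "{..<m}"] by simp
      finally show False by simp
    qed
    then obtain v where v: "v \<in> {0..m}" "v \<notin> (\<lambda>r. decode m r (\<phi> r)) ` {..<m}"
      by blast
    have "\<forall>r<m. matching_word m v ! r \<noteq> \<phi> r"
      using v decode_matching_word[OF assms] by force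
    then show ?thesis using v(1) unfolding matching_UPB_def by blast
  qed
  show "comb_UPB m (matching_UPB m)"
    unfolding comb_UPB_def
  proof (intro conjI)
    show "finite (matching_UPB m)" unfolding matching_UPB_def by simp
    show "\<forall>x\<in>matching_UPB m. length x = m"
      unfolding matching_UPB_def matching_word_def by auto
    show "\<forall>x\<in>matching_UPB m. \<forall>y\<in>matching_UPB m. x \<noteq> y \<longrightarrow> orth_words x y"
      unfolding matching_UPB_def using matching_word_orth[OF assms] by fastforce
    show "\<forall>\<phi>. \<exists>x\<in>matching_UPB m. \<forall>r<m. x ! r \<noteq> \<phi> r" using avoid by blast
  qed
qed

lemma achievable_odd: "odd m \<Longrightarrow> achievable m (Suc m)"
  unfolding achievable_def using matching_UPB by blast

subsection \<open>Small UPBs from explicit certificates\<close>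

text \<open>Executable checks: \<open>orth_check\<close> decides orthogonality of two words, and
  \<open>hitting_choice js R\<close> searches for a choice of symbols at the positions \<open>js\<close> that every
  word of \<open>R\<close> meets somewhere (only symbols occurring in the column need to be tried).
  The guard \<open>R = []\<close> is a conditional so that evaluation by the simplifier explores the
  search tree lazily.\<close>
definition orth_check :: "word \<Rightarrow> word \<Rightarrow> bool" where
  "orth_check x y = list_ex (\<lambda>(a, b). fst a = fst b \<and> snd a \<noteq> snd b) (zip x y)"

fun hitting_choice :: "nat list \<Rightarrow> word list \<Rightarrow> bool" where
  "hitting_choice [] R = (R = [])"
| "hitting_choice (j # js) R = (if R = [] then True else
     list_ex (\<lambda>\<sigma>. hitting_choice js (filter (\<lambda>x. x ! j \<noteq> \<sigma>) R)) (remdups (map (\<lambda>x. x ! j) R)))"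

definition valid_certificate :: "nat \<Rightarrow> word list \<Rightarrow> bool" where
  "valid_certificate p L \<longleftrightarrow> list_all (\<lambda>x. length x = p) L \<and> distinct L
     \<and> list_all (\<lambda>x. list_all (\<lambda>y. x = y \<or> orth_check x y) L) L
     \<and> \<not> hitting_choice [0..<p] L"

lemma orth_check_sound: "length x = length y \<Longrightarrow> orth_check x y \<Longrightarrow> orth_words x y"
  unfolding orth_check_def orth_words_def list_ex_iff by (auto simp: set_zip) (metis fst_conv snd_conv)

lemma no_hitting_choice:
  "\<not> hitting_choice js R \<Longrightarrow> \<exists>x\<in>set R. \<forall>j\<in>set js. x ! j \<noteq> \<phi> j"
proof (induction js arbitrary: R)
  case Nil
  then show ?case by (cases R) auto
next
  case (Cons j js)
  then have "R \<noteq> []" by auto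
  then obtain x0 where x0: "x0 \<in> set R" by (cases R) auto
  have none: "\<forall>\<sigma>\<in>(\<lambda>x. x ! j) ` set R. \<not> hitting_choice js (filter (\<lambda>x. x ! j \<noteq> \<sigma>) R)"
    using Cons.prems \<open>R \<noteq> []\<close> by (simp add: list_ex_iff)
  define \<sigma> where "\<sigma> = (if \<phi> j \<in> (\<lambda>x. x ! j) ` set R then \<phi> j else x0 ! j)"
  have "\<sigma> \<in> (\<lambda>x. x ! j) ` set R" unfolding \<sigma>_def using x0 by auto
  then have "\<not> hitting_choice js (filter (\<lambda>x. x ! j \<noteq> \<sigma>) R)" using none by blast
  then obtain x where x: "x \<in> set (filter (\<lambda>x. x ! j \<noteq> \<sigma>) R)" "\<forall>j'\<in>set js. x ! j' \<noteq> \<phi> j'"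
    using Cons.IH by blast
  have "x ! j \<noteq> \<phi> j"
  proof (cases "\<phi> j \<in> (\<lambda>x. x ! j) ` set R")
    case True then show ?thesis using x(1) unfolding \<sigma>_def by simp
  next
    case False then show ?thesis using x(1) by force
  qed
  then have "\<forall>j'\<in>set (j # js). x ! j' \<noteq> \<phi> j'" using x(2) by simp
  moreover have "x \<in> set R" using x(1) by simp
  ultimately show ?case by blast
qed

lemma certified_achievable:
  assumes "valid_certificate p L"
  shows "achievable p (length L)"
proof -
  have len: "list_all (\<lambda>x. length x = p) L"
    and orth: "list_all (\<lambda>x. list_all (\<lambda>y. x = y \<or> orth_check x y) L) L"
    and dist: "distinct L" and hit: "\<not> hitting_choice [0..<p] L"
    using assms unfolding valid_certificate_def by blast+
  have "comb_UPB p (set L)"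
    unfolding comb_UPB_def
  proof (intro conjI)
    show "finite (set L)" by simp
    show lens: "\<forall>x\<in>set L. length x = p" using len by (simp only: list_all_iff)
    show "\<forall>x\<in>set L. \<forall>y\<in>set L. x \<noteq> y \<longrightarrow> orth_words x y"
      using orth lens orth_check_sound unfolding list_all_iff by metis
    show "\<forall>\<phi>. \<exists>x\<in>set L. \<forall>j<p. x ! j \<noteq> \<phi> j"
    proof
      fix \<phi>
      show "\<exists>x\<in>set L. \<forall>j<p. x ! j \<noteq> \<phi> j"
        using no_hitting_choice[OF hit, of \<phi>] by (auto simp: atLeast0LessThan)
    qed
  qed
  then show ?thesis
    unfolding achievable_def using distinct_card[OF dist] by blast
qed

lemma achievable_4_6: "achievable 4 6"
proof -
  have "achievable 4 (length ([[(0, False), (0, False), (0, False), (0, False)], [(0, False), (2, True), (0, True), (3, False)], [(1, False), (0, True), (2, True), (3, True)], [(1, True), (2, False), (0, True), (2, True)], [(0, True), (1, True), (2, False), (2, False)], [(1, True), (1, False), (0, False), (0, True)]] :: word list))"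
    by (rule certified_achievable) code_simp
  then show ?thesis by (simp add: numeral_eq_Suc)
qed

lemma achievable_4_7: "achievable 4 7"
proof -
  have "achievable 4 (length ([[(0, False), (0, False), (0, False), (0, False)], [(1, False), (0, True), (3, False), (1, True)], [(0, True), (0, True), (3, True), (0, False)], [(0, False), (1, True), (0, True), (1, False)], [(1, False), (0, False), (0, True), (1, True)], [(0, True), (0, False), (1, False), (1, False)], [(1, True), (1, False), (1, True), (0, True)]] :: word list))"
    by (rule certified_achievable) code_simp
  then show ?thesis by (simp add: numeral_eq_Suc)
qed

lemma achievable_4_9: "achievable 4 9"
proof -
  have "achievable 4 (length ([[(0, False), (0, False), (0, False), (0, False)], [(0, True), (0, True), (2, True), (0, True)], [(1, True), (1, True), (2, False), (0, True)], [(1, False), (0, False), (0, True), (1, True)], [(0, False), (0, True), (2, True), (1, True)], [(0, True), (0, False), (2, True), (1, False)], [(0, True), (0, True), (0, True), (0, False)], [(0, False), (1, False), (0, True), (1, False)], [(0, True), (0, True), (0, False), (0, False)]] :: word list))"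
    by (rule certified_achievable) code_simp
  then show ?thesis by (simp add: numeral_eq_Suc)
qed

lemma achievable_4_10: "achievable 4 10"
proof -
  have "achievable 4 (length ([[(0, False), (0, False), (0, False), (0, False)], [(1, False), (0, False), (0, True), (2, False)], [(1, True), (1, True), (1, True), (0, True)], [(0, True), (1, False), (0, False), (1, True)], [(1, True), (0, True), (1, False), (1, False)], [(1, False), (0, True), (2, True), (1, False)], [(1, False), (0, True), (2, False), (1, False)], [(1, False), (0, False), (0, True), (2, True)], [(1, True), (0, False), (0, True), (0, False)], [(0, False), (0, True), (1, False), (1, True)]] :: word list))"
    by (rule certified_achievable) code_simp
  then show ?thesis by (simp add: numeral_eq_Suc)
qed

lemma achievable_6_10: "achievable 6 10"
proof -
  have "achievable 6 (length ([[(0, False), (2, False), (0, False), (2, False), (0, False), (2, False)], [(2, False), (2, True), (1, False), (3, True), (1, True), (1, False)], [(1, True), (1, False), (2, False), (2, True), (1, False), (3, True)], [(1, False), (3, True), (1, True), (1, False), (2, False), (2, True)], [(0, True), (0, False), (2, True), (3, False), (2, True), (0, True)], [(2, True), (0, True), (0, True), (0, False), (2, True), (3, False)], [(2, True), (3, False), (2, True), (0, True), (0, True), (0, False)], [(2, True), (1, True), (0, True), (1, True), (2, False), (0, True)], [(2, False), (0, True), (2, True), (1, True), (0, True), (1, True)], [(0, True), (1, True), (2, False), (0, True), (2, True), (1, True)]] :: word list))"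
    by (rule certified_achievable) code_simp
  then show ?thesis by (simp add: numeral_eq_Suc)
qed

lemma achievable_6_11: "achievable 6 11"
proof -
  have "achievable 6 (length ([[(0, False), (3, True), (0, False), (3, True), (0, False), (3, True)], [(2, False), (3, False), (2, False), (3, False), (2, False), (3, False)], [(0, False), (1, True), (2, False), (0, False), (0, True), (3, True)], [(0, True), (3, True), (0, False), (1, True), (2, False), (0, False)], [(2, False), (0, False), (0, True), (3, True), (0, False), (1, True)], [(1, False), (3, False), (2, True), (2, False), (1, True), (1, False)], [(1, True), (1, False), (1, False), (3, False), (2, True), (2, False)], [(2, True), (2, False), (1, True), (1, False), (1, False), (3, False)], [(0, True), (0, True), (2, False), (1, True), (2, True), (2, True)], [(2, True), (2, True), (0, True), (0, True), (2, False), (1, True)], [(2, False), (1, True), (2, True), (2, True), (0, True), (0, True)]] :: word list))"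
    by (rule certified_achievable) code_simp
  then show ?thesis by (simp add: numeral_eq_Suc)
qed

lemma achievable_0_1: "achievable 0 1"
  unfolding achievable_def comb_UPB_def by (intro exI[of _ "{[]}"]) simp

lemma achievable_1_2: "achievable 1 2"
  using achievable_odd[of 1] by (simp add: numeral_2_eq_2)

lemma achievable_glue_odd:
  "odd q \<Longrightarrow> length xs = Suc q \<Longrightarrow> \<forall>x\<in>set xs. achievable r x \<Longrightarrow> achievable (q + r) (sum_list xs)"
  using achievable_glue[OF achievable_odd] .

lemma achievable_add: "achievable p a \<Longrightarrow> achievable p b \<Longrightarrow> achievable (Suc p) (a + b)"
  using achievable_glue[OF achievable_1_2, of "[a, b]" p] by simp

lemma achievable_full: "achievable p (2 ^ p)"
proof (induction p)
  case 0 then show ?case using achievable_0_1 by simp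
next
  case (Suc p) then show ?case using achievable_add[of p "2 ^ p" "2 ^ p"] by (simp add: mult_2)
qed

lemma achievable_4_12: "achievable 4 12"
  using achievable_add[OF achievable_odd[of 3] achievable_full[of 3]] by simp

lemma achievable_4_range: "6 \<le> s \<Longrightarrow> s \<le> 10 \<Longrightarrow> achievable 4 s"
proof -
  assume "6 \<le> s" "s \<le> 10"
  then have "s \<in> {6, 7, 8, 9, 10}" by auto
  moreover have "achievable 4 8"
    using achievable_add[OF achievable_odd[of 3] achievable_odd[of 3]] by simp
  ultimately show ?thesis
    using achievable_4_6 achievable_4_7 achievable_4_9 achievable_4_10 by auto
qed

lemma achievable_5_range: "12 \<le> s \<Longrightarrow> s \<le> 26 \<Longrightarrow> achievable 5 s"
proof -
  assume s: "12 \<le> s" "s \<le> 26"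
  consider "s \<le> 20" | "s = 21" | "s = 22" | "23 \<le> s" using s by linarith
  then show ?thesis
  proof cases
    case 1
    then have "achievable 4 (s div 2)" "achievable 4 (s - s div 2)"
      using s by (auto intro!: achievable_4_range)
    then show ?thesis using achievable_add[of 4 "s div 2" "s - s div 2"] by simp
  next
    case 2 then show ?thesis using achievable_add[OF achievable_4_9 achievable_4_12] by simp
  next
    case 3 then show ?thesis using achievable_add[OF achievable_4_10 achievable_4_12] by simp
  next
    case 4
    then have "achievable 4 (s - 16)" using s by (auto intro!: achievable_4_range)
    then show ?thesis using achievable_add[OF achievable_full[of 4], of "s - 16"] 4 by simp
  qed
qed

subsection \<open>Writing a number as a sum of block sizes\<close>

lemma sum_list_in_interval:
  "1 \<le> j \<Longrightarrow> j * a \<le> s \<Longrightarrow> s \<le> j * b \<Longrightarrow>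
   \<exists>xs. length xs = j \<and> (\<forall>x\<in>set xs. a \<le> x \<and> x \<le> (b::nat)) \<and> sum_list xs = s"
proof (induction j arbitrary: s rule: nat_induct_at_least)
  case base
  then show ?case by (intro exI[of _ "[s]"]) auto
next
  case (Suc j)
  have "a \<le> b" using Suc.prems by (metis le_trans mult_le_cancel1 zero_less_Suc)
  have jab: "j * a \<le> j * b" using \<open>a \<le> b\<close> by simp
  have bounds: "j * a + a \<le> s" "s \<le> j * b + b" using Suc.prems by (simp_all add: algebra_simps)
  define x where "x = max a (s - j * b)"
  have x: "a \<le> x" "x \<le> b" "x \<le> s" "j * a \<le> s - x" "s - x \<le> j * b"
    using jab bounds \<open>a \<le> b\<close> unfolding x_def by (cases "a \<le> s - j * b"; simp add: max_def; linarith)+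
  obtain ys where "length ys = j" "\<forall>y\<in>set ys. a \<le> y \<and> y \<le> b" "sum_list ys = s - x"
    using Suc.IH x(4,5) by blast
  then show ?case using x by (intro exI[of _ "x # ys"]) auto
qed

lemma sum_list_mixed:
  assumes "1 \<le> k" "m * c + k * a \<le> s" "s \<le> m * c + k * (b::nat)"
  shows "\<exists>xs. length xs = m + k \<and> (\<forall>x\<in>set xs. x = c \<or> (a \<le> x \<and> x \<le> b)) \<and> sum_list xs = s"
proof -
  have "k * a \<le> s - m * c" "s - m * c \<le> k * b" using assms(2,3) by linarith+
  then obtain ys where ys: "length ys = k" "\<forall>y\<in>set ys. a \<le> y \<and> y \<le> b" "sum_list ys = s - m * c"
    using sum_list_in_interval[OF assms(1)] by blast
  then have "sum_list (ys @ replicate m c) = s" using assms(2) by (simp add: sum_list_replicate)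
  then show ?thesis using ys by (intro exI[of _ "ys @ replicate m c"]) auto
qed

subsection \<open>The range of achievable sizes\<close>

text \<open>Low sizes on an odd number \<open>q + 4\<close> of qubits: glue \<open>q + 1\<close> blocks of sizes in
  \<open>[6, 10] \<union> {12}\<close> on 4 qubits along the odd construction on \<open>q\<close> qubits.\<close>
lemma achievable_low_4_blocks:
  assumes "odd q" "6 * (q + 1) \<le> s" "s \<le> 12 * q"
  shows "achievable (q + 4) s"
proof -
  define e where "e = s - 6 * (q + 1)"
  define m where "m = e div 6"
  define k where "k = q + 1 - m"
  have e: "s = 6 * q + 6 + e" "e + 6 \<le> 6 * q" using assms(2,3) unfolding e_def by auto
  have m: "6 * m \<le> e" "e < 6 * m + 6" unfolding m_def by simp_all
  have k: "q + 1 = m + k" "2 \<le> k" using e m unfolding k_def by linarith+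
  moreover have "m * 12 + k * 6 \<le> s" "s \<le> m * 12 + k * 10" using k e m by linarith+
  ultimately obtain xs where xs: "length xs = q + 1" "\<forall>x\<in>set xs. x = 12 \<or> (6 \<le> x \<and> x \<le> 10)"
    "sum_list xs = s"
    using sum_list_mixed[of k m 12 6 s 10] by auto
  have "\<forall>x\<in>set xs. achievable 4 x" using xs(2) achievable_4_12 achievable_4_range by auto
  then show ?thesis using achievable_glue_odd[OF assms(1), of xs] xs by simp
qed

text \<open>Low sizes on an even number \<open>q + 5\<close> of qubits: glue \<open>q + 1\<close> blocks of sizes in
  \<open>{6} \<union> [12, 18]\<close> on 5 qubits along the odd construction on \<open>q\<close> qubits.\<close>
lemma achievable_low_5_blocks:
  assumes "odd q" "6 * (q + 2) \<le> s" "s \<le> 12 * q + 11"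
  shows "achievable (q + 5) s"
proof -
  define e where "e = s - 6 * (q + 1)"
  define k where "k = e div 6"
  define m where "m = q + 1 - k"
  have e: "s = 6 * q + 6 + e" "6 \<le> e" "e \<le> 6 * q + 5" using assms(2,3) unfolding e_def by auto
  have k: "6 * k \<le> e" "e < 6 * k + 6" unfolding k_def by simp_all
  then have "1 \<le> k" "q + 1 = m + k" using e unfolding m_def by linarith+
  moreover have "m * 6 + k * 12 \<le> s" "s \<le> m * 6 + k * 18" using calculation e k by linarith+
  ultimately obtain xs where xs: "length xs = q + 1" "\<forall>x\<in>set xs. x = 6 \<or> (12 \<le> x \<and> x \<le> 18)"
    "sum_list xs = s"
    using sum_list_mixed[of k m 6 12 s 18] by auto
  have "achievable 5 6" using achievable_odd[of 5] by simp
  then have "\<forall>x\<in>set xs. achievable 5 x" using xs(2) achievable_5_range by auto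
  then show ?thesis using achievable_glue_odd[OF assms(1), of xs] xs by simp
qed

text \<open>The invariant of the induction: all sizes in \<open>[6(p - 3), 2\<^sup>p - 6]\<close> are achievable.\<close>
definition all_achievable_from :: "nat \<Rightarrow> bool" where
  "all_achievable_from p \<longleftrightarrow> (\<forall>s. 6 * (p - 3) \<le> s \<longrightarrow> s \<le> 2 ^ p - 6 \<longrightarrow> achievable p s)"

lemma exp_bound: "5 \<le> p \<Longrightarrow> 6 * (p - 3) + 11 \<le> (2::nat) ^ p"
  by (induction p rule: nat_induct_at_least) simp_all

text \<open>High sizes on \<open>p + 1\<close> qubits split into two sizes on \<open>p\<close> qubits (one of them
  \<open>2\<^sup>p\<close> near the top of the range).\<close>
lemma achievable_high:
  assumes "5 \<le> p" "all_achievable_from p" "12 * (p - 3) \<le> s" "s \<le> 2 ^ Suc p - 6"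
  shows "achievable (Suc p) s"
proof -
  have range: "achievable p t" if "6 * (p - 3) \<le> t" "t \<le> 2 ^ p - 6" for t
    using assms(2) that unfolding all_achievable_from_def by blast
  have bound: "6 * (p - 3) + 11 \<le> 2 ^ p" using exp_bound[OF assms(1)] .
  show ?thesis
  proof (cases "s \<le> 2 ^ Suc p - 12")
    case True
    then have "achievable p (s div 2)" "achievable p (s - s div 2)"
      using assms(3) by (auto intro!: range)
    then show ?thesis using achievable_add[of p "s div 2" "s - s div 2"] by simp
  next
    case False
    then have "achievable p (s - 2 ^ p)" using assms(4) bound by (intro range) auto
    moreover have "2 ^ p \<le> s" using False bound by simp
    ultimately show ?thesis using achievable_add[OF achievable_full[of p], of "s - 2 ^ p"] by simp
  qed
qed

lemma all_achievable_from_step: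
  assumes "5 \<le> p" "all_achievable_from p"
  shows "all_achievable_from (Suc p)"
  unfolding all_achievable_from_def
proof (intro allI impI)
  fix s assume low: "6 * (Suc p - 3) \<le> s" and high: "s \<le> 2 ^ Suc p - 6"
  show "achievable (Suc p) s"
  proof (cases "12 * (p - 3) \<le> s")
    case True then show ?thesis using achievable_high assms high by blast
  next
    case False
    show ?thesis
    proof (cases "even p")
      case True
      then have "odd (p - 3)" "Suc p = (p - 3) + 4" using assms(1) by presburger+
      then show ?thesis using achievable_low_4_blocks[of "p - 3" s] low False assms(1) by simp
    next
      case False
      then have "odd (p - 4)" "Suc p = (p - 4) + 5" using assms(1) by presburger+
      then show ?thesis
        using achievable_low_5_blocks[of "p - 4" s] low \<open>\<not> 12 * (p - 3) \<le> s\<close> assms(1) by simp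
    qed
  qed
qed

lemma all_achievable_from: "5 \<le> p \<Longrightarrow> all_achievable_from p"
proof (induction p rule: nat_induct_at_least)
  case base
  show ?case unfolding all_achievable_from_def using achievable_5_range by simp
next
  case (Suc p) then show ?case using all_achievable_from_step by blast
qed

text \<open>Sizes on 7 qubits below \<open>6 \<cdot> 4\<close>, from the certified 6-qubit UPBs.\<close>
lemma achievable_7_low: "20 \<le> s \<Longrightarrow> s \<le> 23 \<Longrightarrow> achievable 7 s"
proof -
  assume "20 \<le> s" "s \<le> 23"
  then have "s \<in> {20, 21, 22, 23}" by auto
  moreover have "achievable 6 12" using achievable_add[OF achievable_odd[of 5] achievable_odd[of 5]] by simp
  ultimately show ?thesis
    using achievable_add[OF achievable_6_10 achievable_6_10] achievable_add[OF achievable_6_10 achievable_6_11]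
      achievable_add[OF achievable_6_10 \<open>achievable 6 12\<close>] achievable_add[OF achievable_6_11 \<open>achievable 6 12\<close>]
    by auto
qed

text \<open>The range of the theorem: for \<open>p \<ge> 9\<close> it lies inside \<open>[6(p - 3), 2\<^sup>p - 6]\<close>;
  for \<open>p = 7, 8\<close> the few remaining sizes are obtained from 6- and 7-qubit UPBs.\<close>
lemma achievable_theorem_range:
  assumes "7 \<le> p" "p\<^sup>2 + 3 * p \<le> 2 * s + 30" "s \<le> 2 ^ p - 6"
  shows "achievable p s"
proof -
  consider "9 \<le> p" | "p = 7" | "p = 8" using assms(1) by linarith
  then show ?thesis
  proof cases
    case 1
    then have "9 * p \<le> p\<^sup>2" by (simp add: power2_eq_square)
    then have "6 * (p - 3) \<le> s" using assms(2) by linarith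
    then show ?thesis using all_achievable_from[of p] 1 assms(3) unfolding all_achievable_from_def by auto
  next
    case 2
    then show ?thesis
      using all_achievable_from[of 7] achievable_7_low assms(2,3) unfolding all_achievable_from_def
      by (cases "24 \<le> s") auto
  next
    case 3
    have "achievable 8 29"
      using achievable_add[OF achievable_odd[of 7] achievable_7_low[of 21]] by simp
    then show ?thesis
      using all_achievable_from[of 8] 3 assms(2,3) unfolding all_achievable_from_def
      by (cases "s = 29") auto
  qed
qed

theorem theorem1:
  fixes p s :: nat
  assumes "p \<ge> 7"
    and "(real p ^ 2 + 3 * real p - 30) / 2 \<le> real s"
    and "s \<le> 2 ^ p - 6"
  shows "\<exists>S. is_UPB p S \<and> card S = s"
proof -
  have "real (p\<^sup>2 + 3 * p) \<le> real (2 * s + 30)" using assms(2) by simp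
  then have "p\<^sup>2 + 3 * p \<le> 2 * s + 30" by (simp only: of_nat_le_iff)
  then show ?thesis using achievable_theorem_range assms(1,3) achievable_UPB by blast
qed

end
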